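(* Let $\theta:R\to S$ be a ring homomorphism, and let $\mathfrak p\subset R$, $\mathfrak q\subset S$ be prime ideals with $\mathfrak p\subseteq\theta^{-1}(\mathfrak q)$. Suppose there exists an $R$-linear map $T:S\to R$ with $T(1)=1$ and $T(\mathfrak q)\subseteq\mathfrak p$. If $S$ is purely $F$-regular along $\mathfrak q$, then $R$ is purely $F$-regular along $\mathfrak p$.
   Context: All rings are noetherian $F$-finite commutative $\mathbb F_p$-algebras. $F^e_*R$ is $R$ viewed as an $R$-module via $r\mapsto r^{p^e}$; $\mathcal C_{e,R}=\operatorname{Hom}_R(F^e_*R,R)$. For an ideal $\mathfrak a$, $\phi\in\mathcal C_{e,R}$ is $\mathfrak a$-compatible if $\phi(F^e_*\mathfrak a)\subseteq\mathfrak a$. For a prime $\mathfrak p\subset R$, $R$ is purely $F$-regular along $\mathfrak p$ if (i) there exist $e>0$ and a $\mathfrak p$-compatible $\phi\in\mathcal C_{e,R}$ with $\phi(F^e_*R)\not\subseteq\mathfrak p$, and (ii) every proper ideal $\mathfrak b\subsetneq R$ that is $\phi$-compatible for every $e>0$ and every $\mathfrak p$-compatible $\phi\in\mathcal C_{e,R}$ satisfies $\mathfrak b\subseteq\mathfrak p$. (Equivalently: for every $r\notin\mathfrak p$ there are $e>0$ and a $\mathfrak p$-compatible $\phi\in\mathcal C_{e,R}$ with $\phi(F^e_*r)=1$.) *)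

theory Defs
  imports Main "HOL-Computational_Algebra.Primes"
begin

definition is_ideal :: "'a::comm_ring_1 set \<Rightarrow> bool" where
  "is_ideal I \<longleftrightarrow> 0 \<in> I \<and> (\<forall>x\<in>I. \<forall>y\<in>I. x + y \<in> I) \<and> (\<forall>r x. x \<in> I \<longrightarrow> r * x \<in> I)"

definition is_prime_ideal :: "'a::comm_ring_1 set \<Rightarrow> bool" where
  "is_prime_ideal P \<longleftrightarrow> is_ideal P \<and> P \<noteq> UNIV \<and> (\<forall>a b. a * b \<in> P \<longrightarrow> a \<in> P \<or> b \<in> P)"

definition noetherian_ring :: "'a::comm_ring_1 itself \<Rightarrow> bool" where
  "noetherian_ring _ \<longleftrightarrow> (\<forall>I::'a set. is_ideal I \<longrightarrow>
     (\<exists>G. finite G \<and> I = {y. \<exists>c. y = (\<Sum>g\<in>G. c g * g)}))"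

text \<open>F-finite: \<open>F_* R\<close> is a finitely generated \<open>R\<close>-module, where \<open>r\<close> acts on \<open>F_* R\<close>
  by multiplication with \<open>r ^ p\<close>.\<close>
definition F_finite :: "nat \<Rightarrow> 'a::comm_ring_1 itself \<Rightarrow> bool" where
  "F_finite p _ \<longleftrightarrow> (\<exists>G::'a set. finite G \<and> (\<forall>x. \<exists>c. x = (\<Sum>g\<in>G. (c g) ^ p * g)))"

text \<open>\<open>\<phi> \<in> C_{e,R} = Hom_R(F^e_* R, R)\<close>: additive and \<open>\<phi>(r^{p^e} x) = r \<phi>(x)\<close>.\<close>
definition Cmap :: "nat \<Rightarrow> nat \<Rightarrow> ('a::comm_ring_1 \<Rightarrow> 'a) \<Rightarrow> bool" where
  "Cmap p e \<phi> \<longleftrightarrow> (\<forall>x y. \<phi> (x + y) = \<phi> x + \<phi> y) \<and> (\<forall>r x. \<phi> (r ^ (p ^ e) * x) = r * \<phi> x)"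

definition compatible :: "('a \<Rightarrow> 'a) \<Rightarrow> 'a set \<Rightarrow> bool" where
  "compatible \<phi> A \<longleftrightarrow> \<phi> ` A \<subseteq> A"

text \<open>Purely F-regular along a prime \<open>P\<close> (conditions (i) and (ii)).\<close>
definition purely_F_regular_along :: "nat \<Rightarrow> 'a::comm_ring_1 set \<Rightarrow> bool" where
  "purely_F_regular_along p P \<longleftrightarrow>
     (\<exists>e>0. \<exists>\<phi>. Cmap p e \<phi> \<and> compatible \<phi> P \<and> \<not> (range \<phi> \<subseteq> P)) \<and>
     (\<forall>B. is_ideal B \<and> B \<noteq> UNIV \<and>
          (\<forall>e>0. \<forall>\<phi>. Cmap p e \<phi> \<and> compatible \<phi> P \<longrightarrow> compatible \<phi> B) \<longrightarrow> B \<subseteq> P)"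

definition ring_hom_fun :: "('a::comm_ring_1 \<Rightarrow> 'b::comm_ring_1) \<Rightarrow> bool" where
  "ring_hom_fun f \<longleftrightarrow> f 1 = 1 \<and> (\<forall>x y. f (x + y) = f x + f y) \<and> (\<forall>x y. f (x * y) = f x * f y)"

end

theory Submission
  imports Defs
begin

text \<open>Each \<open>Q\<close>-compatible \<open>\<phi> \<in> C_{e,S}\<close> and each \<open>c \<in> S\<close> give the \<open>P\<close>-compatible
  map \<open>x \<mapsto> T (\<phi> (c \<theta>(x)))\<close> in \<open>C_{e,R}\<close>. For a proper ideal \<open>A\<close> of \<open>R\<close>, the ideal of those
  \<open>s \<in> S\<close> with \<open>T(s S) \<subseteq> A\<close> and \<open>T(\<phi>(s)) \<in> A\<close> for all \<open>Q\<close>-compatible \<open>\<phi>\<close> is proper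
  (as \<open>T(1) = 1\<close>) and compatible with every \<open>Q\<close>-compatible \<open>\<phi>\<close>, hence contained in \<open>Q\<close>.
  For condition (ii) take \<open>A = B\<close>: if \<open>b \<in> B - P\<close>, then \<open>\<theta>(b)\<close> lies in this ideal but not
  in \<open>Q\<close>, since \<open>T(\<theta>(b)) = b\<close>. For condition (i) take \<open>A = P\<close>: if every \<open>P\<close>-compatible
  map landed in \<open>P\<close>, the ideal would contain a witness \<open>\<phi>(c) \<notin> Q\<close> of condition (i) for \<open>S\<close>.\<close>

lemma Cmap_zero: "Cmap p e \<phi> \<Longrightarrow> \<phi> 0 = 0"
  unfolding Cmap_def by (metis add_0 add_left_cancel add_0_right)

lemma Cmap_add: "Cmap p e \<phi> \<Longrightarrow> \<phi> (x + y) = \<phi> x + \<phi> y"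
  unfolding Cmap_def by blast

lemma Cmap_scale: "Cmap p e \<phi> \<Longrightarrow> \<phi> (r ^ (p ^ e) * x) = r * \<phi> x"
  unfolding Cmap_def by blast

lemma Cmap_comp:
  fixes f g :: "'a::comm_ring_1 \<Rightarrow> 'a"
  assumes "Cmap p e1 f" "Cmap p e2 g"
  shows "Cmap p (e1 + e2) (f \<circ> g)"
  using assms by (simp add: Cmap_def power_add power_mult)

lemma Cmap_mult_left:
  assumes "Cmap p e \<phi>"
  shows "Cmap p e (\<lambda>x. \<phi> (c * x))"
  using assms unfolding Cmap_def by (metis distrib_left mult.left_commute)

lemma compatible_comp: "compatible f A \<Longrightarrow> compatible g A \<Longrightarrow> compatible (f \<circ> g) A"
  unfolding compatible_def by auto

lemma compatible_mult_left:
  assumes "compatible \<phi> I" "is_ideal I"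
  shows "compatible (\<lambda>x. \<phi> (c * x)) I"
  using assms unfolding compatible_def is_ideal_def by auto

lemma ideal_eq_UNIV_iff_one_mem:
  assumes "is_ideal I"
  shows "I = UNIV \<longleftrightarrow> 1 \<in> I"
proof
  assume "1 \<in> I"
  then have "x * 1 \<in> I" for x
    using assms unfolding is_ideal_def by blast
  then show "I = UNIV"
    by auto
qed simp

lemma ring_hom_fun_power: "ring_hom_fun \<theta> \<Longrightarrow> \<theta> (x ^ n) = \<theta> x ^ n"
  by (induction n) (auto simp: ring_hom_fun_def)

locale splitting =
  fixes \<theta> :: "'a::comm_ring_1 \<Rightarrow> 'b::comm_ring_1" and T :: "'b \<Rightarrow> 'a"
  assumes hom: "ring_hom_fun \<theta>"
    and T_add: "T (x + y) = T x + T y"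
    and T_linear: "T (\<theta> r * s) = r * T s"
    and T_one: "T 1 = 1"
begin

lemma T_zero: "T 0 = 0"
  using T_add[of 0 0] by simp

lemma T_theta: "T (\<theta> r) = r"
  using T_linear[of r 1] T_one by simp

definition transfer :: "('b \<Rightarrow> 'b) \<Rightarrow> 'b \<Rightarrow> 'a \<Rightarrow> 'a" where
  "transfer \<phi> c x = T (\<phi> (c * \<theta> x))"

lemma Cmap_transfer:
  assumes "Cmap p e \<phi>"
  shows "Cmap p e (transfer \<phi> c)"
  unfolding Cmap_def
proof (intro allI conjI)
  fix x y
  show "transfer \<phi> c (x + y) = transfer \<phi> c x + transfer \<phi> c y"
    using hom by (simp add: transfer_def ring_hom_fun_def distrib_left Cmap_add[OF assms] T_add)
next
  fix r x
  have "c * \<theta> (r ^ (p ^ e) * x) = \<theta> r ^ (p ^ e) * (c * \<theta> x)"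
    using hom ring_hom_fun_power[OF hom] unfolding ring_hom_fun_def
    by (metis mult.left_commute)
  then show "transfer \<phi> c (r ^ (p ^ e) * x) = r * transfer \<phi> c x"
    by (simp add: transfer_def Cmap_scale[OF assms] T_linear)
qed

lemma compatible_transfer:
  assumes "compatible \<phi> Q" "is_ideal Q" "P \<subseteq> \<theta> -` Q" "T ` Q \<subseteq> P"
  shows "compatible (transfer \<phi> c) P"
  unfolding compatible_def
proof (rule image_subsetI)
  fix x assume "x \<in> P"
  then have "c * \<theta> x \<in> Q"
    using assms(2,3) unfolding is_ideal_def by blast
  then show "transfer \<phi> c x \<in> P"
    using assms(1,4) unfolding compatible_def transfer_def by blast
qed

definition trace_ideal :: "nat \<Rightarrow> 'b set \<Rightarrow> 'a set \<Rightarrow> 'b set" where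
  "trace_ideal p Q A = {s. (\<forall>t. T (s * t) \<in> A) \<and>
     (\<forall>e>0. \<forall>\<phi>. Cmap p e \<phi> \<and> compatible \<phi> Q \<longrightarrow> T (\<phi> s) \<in> A)}"

lemma trace_idealI:
  assumes "\<And>t. T (s * t) \<in> A"
    and "\<And>e \<phi>. e > 0 \<Longrightarrow> Cmap p e \<phi> \<Longrightarrow> compatible \<phi> Q \<Longrightarrow> T (\<phi> s) \<in> A"
  shows "s \<in> trace_ideal p Q A"
  using assms unfolding trace_ideal_def by blast

lemma trace_idealD:
  assumes "s \<in> trace_ideal p Q A"
  shows trace_ideal_mult: "T (s * t) \<in> A"
    and trace_ideal_Cmap: "e > 0 \<Longrightarrow> Cmap p e \<phi> \<Longrightarrow> compatible \<phi> Q \<Longrightarrow> T (\<phi> s) \<in> A"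
  using assms unfolding trace_ideal_def by blast+

lemma is_ideal_trace_ideal:
  assumes "is_ideal Q" "is_ideal A"
  shows "is_ideal (trace_ideal p Q A)"
  unfolding is_ideal_def
proof (intro conjI ballI allI impI)
  have A_zero: "0 \<in> A" and A_add: "\<And>a b. a \<in> A \<Longrightarrow> b \<in> A \<Longrightarrow> a + b \<in> A"
    using assms(2) unfolding is_ideal_def by blast+
  show "0 \<in> trace_ideal p Q A"
    using A_zero by (intro trace_idealI) (simp_all add: T_zero Cmap_zero)
  fix x y assume x: "x \<in> trace_ideal p Q A" and y: "y \<in> trace_ideal p Q A"
  show "x + y \<in> trace_ideal p Q A"
  proof (rule trace_idealI)
    show "T ((x + y) * t) \<in> A" for t
      using A_add[OF trace_ideal_mult[OF x] trace_ideal_mult[OF y]]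
      by (simp add: distrib_right T_add)
    show "T (\<phi> (x + y)) \<in> A" if "e > 0" "Cmap p e \<phi>" "compatible \<phi> Q" for e \<phi>
      using A_add[OF trace_ideal_Cmap[OF x that] trace_ideal_Cmap[OF y that]]
      by (simp add: Cmap_add[OF that(2)] T_add)
  qed
next
  fix r x assume x: "x \<in> trace_ideal p Q A"
  show "r * x \<in> trace_ideal p Q A"
  proof (rule trace_idealI)
    show "T (r * x * t) \<in> A" for t
      using trace_ideal_mult[OF x, of "r * t"] by (simp add: ac_simps)
    show "T (\<phi> (r * x)) \<in> A" if "e > 0" "Cmap p e \<phi>" "compatible \<phi> Q" for e \<phi>
      using trace_ideal_Cmap[OF x that(1) Cmap_mult_left[OF that(2)]
          compatible_mult_left[OF that(3) assms(1)]] .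
  qed
qed

lemma trace_ideal_ne_UNIV:
  assumes "is_ideal A" "A \<noteq> UNIV"
  shows "trace_ideal p Q A \<noteq> UNIV"
proof
  assume "trace_ideal p Q A = UNIV"
  then have "1 \<in> A"
    using trace_ideal_mult[of 1 p Q A 1] T_one by simp
  then show False
    using assms ideal_eq_UNIV_iff_one_mem by blast
qed

lemma compatible_trace_ideal:
  assumes "is_ideal Q" "e > 0" "Cmap p e \<phi>" "compatible \<phi> Q"
  shows "compatible \<phi> (trace_ideal p Q A)"
  unfolding compatible_def
proof (rule image_subsetI, rule trace_idealI)
  fix s assume s: "s \<in> trace_ideal p Q A"
  show "T (\<phi> s * t) \<in> A" for t
  proof -
    have "T (\<phi> (t ^ (p ^ e) * s)) \<in> A"
      using trace_ideal_Cmap[OF s assms(2) Cmap_mult_left[OF assms(3)]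
          compatible_mult_left[OF assms(4,1)]] .
    then have "T (t * \<phi> s) \<in> A"
      by (simp only: Cmap_scale[OF assms(3)])
    then show ?thesis
      by (simp add: mult.commute)
  qed
  show "T (g (\<phi> s)) \<in> A" if "e' > 0" "Cmap p e' g" "compatible g Q" for e' g
    using trace_ideal_Cmap[OF s _ Cmap_comp[OF that(2) assms(3)] compatible_comp[OF that(3) assms(4)]]
      that(1) by simp
qed

lemma trace_ideal_subset:
  assumes "purely_F_regular_along p Q" "is_ideal Q" "is_ideal A" "A \<noteq> UNIV"
  shows "trace_ideal p Q A \<subseteq> Q"
proof -
  have maximal: "\<forall>B. is_ideal B \<and> B \<noteq> UNIV \<and>
      (\<forall>e>0. \<forall>\<phi>. Cmap p e \<phi> \<and> compatible \<phi> Q \<longrightarrow> compatible \<phi> B) \<longrightarrow> B \<subseteq> Q"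
    using assms(1) unfolding purely_F_regular_along_def by (rule conjunct2)
  have "\<forall>e>0. \<forall>\<phi>. Cmap p e \<phi> \<and> compatible \<phi> Q \<longrightarrow> compatible \<phi> (trace_ideal p Q A)"
    using compatible_trace_ideal[OF assms(2)] by blast
  with is_ideal_trace_ideal[OF assms(2,3)] trace_ideal_ne_UNIV[OF assms(3,4)] show ?thesis
    by (intro maximal[rule_format] conjI)
qed

context
  fixes p :: nat and P :: "'a set" and Q :: "'b set"
  assumes Q_regular: "purely_F_regular_along p Q"
    and ideal_P: "is_ideal P" "P \<noteq> UNIV" and ideal_Q: "is_ideal Q"
    and P_sub: "P \<subseteq> \<theta> -` Q" and T_Q: "T ` Q \<subseteq> P"
begin

lemma exists_compatible_Cmap_not_into:
  "\<exists>e>0. \<exists>\<psi>. Cmap p e \<psi> \<and> compatible \<psi> P \<and> \<not> range \<psi> \<subseteq> P"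
proof (rule ccontr)
  assume none: "\<not> ?thesis"
  have into_P: "T (\<phi> s) \<in> P" if "e > 0" "Cmap p e \<phi>" "compatible \<phi> Q" for e \<phi> s
  proof -
    have "range (transfer \<phi> s) \<subseteq> P"
      using none that(1) Cmap_transfer[OF that(2)] compatible_transfer[OF that(3) ideal_Q P_sub T_Q]
      by blast
    moreover have "transfer \<phi> s 1 = T (\<phi> s)"
      using hom by (simp add: transfer_def ring_hom_fun_def)
    ultimately show ?thesis
      by (metis rangeI subsetD)
  qed
  have "\<exists>e>0. \<exists>\<phi>. Cmap p e \<phi> \<and> compatible \<phi> Q \<and> \<not> range \<phi> \<subseteq> Q"
    using Q_regular unfolding purely_F_regular_along_def by (rule conjunct1)
  then obtain e \<phi> c where \<phi>: "e > 0" "Cmap p e \<phi>" "compatible \<phi> Q" and "\<phi> c \<notin> Q"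
    by blast
  have "\<phi> c \<in> trace_ideal p Q P"
  proof (rule trace_idealI)
    show "T (\<phi> c * t) \<in> P" for t
    proof -
      have "T (t * \<phi> c) \<in> P"
        using into_P[OF \<phi>, of "t ^ (p ^ e) * c"] by (simp only: Cmap_scale[OF \<phi>(2)])
      then show ?thesis
        by (simp add: mult.commute)
    qed
  qed (rule into_P)
  with \<open>\<phi> c \<notin> Q\<close> show False
    using trace_ideal_subset[OF Q_regular ideal_Q ideal_P] by blast
qed

lemma compatible_ideals_subset:
  assumes B: "is_ideal B" "B \<noteq> UNIV"
    and B_compatible: "\<forall>e>0. \<forall>\<psi>. Cmap p e \<psi> \<and> compatible \<psi> P \<longrightarrow> compatible \<psi> B"
  shows "B \<subseteq> P"
proof
  fix b assume b: "b \<in> B"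
  have "\<theta> b \<in> trace_ideal p Q B"
  proof (rule trace_idealI)
    show "T (\<theta> b * t) \<in> B" for t
    proof -
      have "T (\<theta> b * t) = T t * b"
        unfolding T_linear by (rule mult.commute)
      then show ?thesis
        using b B(1) unfolding is_ideal_def by simp
    qed
    show "T (\<phi> (\<theta> b)) \<in> B" if "e > 0" "Cmap p e \<phi>" "compatible \<phi> Q" for e \<phi>
    proof -
      have "compatible (transfer \<phi> 1) B"
        using B_compatible that(1) Cmap_transfer[OF that(2)]
          compatible_transfer[OF that(3) ideal_Q P_sub T_Q] by blast
      then show ?thesis
        using b by (auto simp: compatible_def transfer_def)
    qed
  qed
  then have "\<theta> b \<in> Q"
    using trace_ideal_subset[OF Q_regular ideal_Q B] by blast
  then show "b \<in> P"
    using T_Q T_theta by force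
qed

lemma purely_F_regular_along_P: "purely_F_regular_along p P"
  unfolding purely_F_regular_along_def
  using exists_compatible_Cmap_not_into compatible_ideals_subset by (intro conjI allI impI) auto

end

end

theorem proposition2p14:
  fixes \<theta> :: "'a::comm_ring_1 \<Rightarrow> 'b::comm_ring_1"
    and T :: "'b \<Rightarrow> 'a"
    and P :: "'a set" and Q :: "'b set" and p :: nat
  assumes "prime p" and "CHAR('a) = p" and "CHAR('b) = p"
    and "noetherian_ring TYPE('a)" and "noetherian_ring TYPE('b)"
    and "F_finite p TYPE('a)" and "F_finite p TYPE('b)"
    and "ring_hom_fun \<theta>"
    and "is_prime_ideal P" and "is_prime_ideal Q"
    and "P \<subseteq> \<theta> -` Q"
    and "\<forall>x y. T (x + y) = T x + T y" and "\<forall>r s. T (\<theta> r * s) = r * T s"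
    and "T 1 = 1" and "T ` Q \<subseteq> P"
    and "purely_F_regular_along p Q"
  shows "purely_F_regular_along p P"
proof -
  interpret splitting \<theta> T
    using assms(8,12-14) by unfold_locales auto
  have "is_ideal P" "P \<noteq> UNIV" "is_ideal Q"
    using assms(9,10) by (auto simp: is_prime_ideal_def)
  then show ?thesis
    using purely_F_regular_along_P assms(11,15,16) by blast
qed

end
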